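(* Let $k$ be a complete non-archimedean valued field of characteristic $p > 0$, and let $r = (r_1,\ldots,r_n)$ be a tuple of positive real numbers. If $[k : k^p] < \infty$, where $k^p:=\{a^p\mid a\in k\}$, then $\Omega_{k\{r^{-1}T\}/k[T]} = 0$.
   Context: $k\{r^{-1}T\} = k\{r_1^{-1}T_1,\ldots,r_n^{-1}T_n\}$ is the Banach $k$-algebra of power series $\sum_{\nu\in\mathbb{Z}_{\ge0}^n} a_\nu T^\nu$, $a_\nu\in k$, with $|a_\nu| r^\nu \to 0$; $k[T]=k[T_1,\ldots,T_n]$. $\Omega_{k\{r^{-1}T\}/k[T]}$ is the module of Kähler differentials. *)

theory Defs
  imports Complex_Main "HOL-Algebra.Ring"
begin

definition nonarch_abs :: "('a::field \<Rightarrow> real) \<Rightarrow> bool" where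
  "nonarch_abs v \<longleftrightarrow>
     (\<forall>x. v x \<ge> 0) \<and> (\<forall>x. v x = 0 \<longleftrightarrow> x = 0) \<and>
     (\<forall>x y. v (x * y) = v x * v y) \<and>
     (\<forall>x y. v (x + y) \<le> max (v x) (v y))"

definition abs_complete :: "('a::field \<Rightarrow> real) \<Rightarrow> bool" where
  "abs_complete v \<longleftrightarrow>
     (\<forall>X :: nat \<Rightarrow> 'a.
        (\<forall>e>0. \<exists>N. \<forall>m\<ge>N. \<forall>n\<ge>N. v (X m - X n) < e) \<longrightarrow>
        (\<exists>L. (\<lambda>n. v (X n - L)) \<longlonglongrightarrow> 0))"

text \<open>\<open>[k : k^p] < \<infinity>\<close>: k is spanned, as a vector space over the subfield
  \<open>k^p = {a^p | a \<in> k}\<close>, by a finite set.\<close>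
definition finite_p_degree :: "'a::field itself \<Rightarrow> nat \<Rightarrow> bool" where
  "finite_p_degree _ p \<longleftrightarrow>
     (\<exists>B :: 'a set. finite B \<and> (\<forall>x::'a. \<exists>c. x = (\<Sum>b\<in>B. (c b) ^ p * b)))"

text \<open>Power series in variables indexed by the finite type \<open>'n\<close>: maps from
  multi-indices \<open>'n \<Rightarrow> nat\<close> to coefficients.\<close>
type_synonym ('n, 'a) pser = "('n \<Rightarrow> nat) \<Rightarrow> 'a"

definition pser_mult :: "('n::finite, 'a::field) pser \<Rightarrow> ('n, 'a) pser \<Rightarrow> ('n, 'a) pser" where
  "pser_mult f g = (\<lambda>\<nu>. \<Sum>\<mu>\<in>{\<mu>. \<forall>i. \<mu> i \<le> \<nu> i}. f \<mu> * g (\<lambda>i. \<nu> i - \<mu> i))"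

text \<open>The ring \<open>k{r^{-1}T}\<close>: power series \<open>\<Sum> a_\<nu> T^\<nu>\<close> with \<open>|a_\<nu>| r^\<nu> \<rightarrow> 0\<close>
  (along the cofinite filter on multi-indices).\<close>
definition tate_ring :: "('a::field \<Rightarrow> real) \<Rightarrow> ('n::finite \<Rightarrow> real) \<Rightarrow> ('n, 'a) pser ring" where
  "tate_ring v r = \<lparr>
     carrier = {f. ((\<lambda>\<nu>. v (f \<nu>) * (\<Prod>i\<in>UNIV. r i ^ \<nu> i)) \<longlongrightarrow> 0) cofinite},
     mult = pser_mult,
     one = (\<lambda>\<nu>. if \<nu> = (\<lambda>_. 0) then 1 else 0),
     zero = (\<lambda>_. 0),
     add = (\<lambda>f g \<nu>. f \<nu> + g \<nu>) \<rparr>"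

text \<open>The polynomial subring \<open>k[T]\<close>: finitely supported coefficient families.\<close>
definition poly_set :: "('n::finite, 'a::field) pser set" where
  "poly_set = {f. finite {\<nu>. f \<nu> \<noteq> 0}}"

text \<open>\<open>\<Omega>_{A/S}\<close> is presented as the free A-module on symbols \<open>dx\<close> (x in A)
  modulo the A-submodule generated by \<open>d(x+y) - dx - dy\<close>, \<open>d(xy) - x dy - y dx\<close>
  and \<open>ds\<close> (s in S). Elements of the free module are finitely supported
  maps \<open>A \<Rightarrow> A\<close>; \<open>fdelta R x\<close> is the basis element \<open>dx\<close>.\<close>

definition fdelta :: "('a, 'b) ring_scheme \<Rightarrow> 'a \<Rightarrow> ('a \<Rightarrow> 'a)" where
  "fdelta R x = (\<lambda>y. if y = x then \<one>\<^bsub>R\<^esub> else \<zero>\<^bsub>R\<^esub>)"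

definition fadd :: "('a, 'b) ring_scheme \<Rightarrow> ('a \<Rightarrow> 'a) \<Rightarrow> ('a \<Rightarrow> 'a) \<Rightarrow> ('a \<Rightarrow> 'a)" where
  "fadd R u w = (\<lambda>y. u y \<oplus>\<^bsub>R\<^esub> w y)"

definition fsub :: "('a, 'b) ring_scheme \<Rightarrow> ('a \<Rightarrow> 'a) \<Rightarrow> ('a \<Rightarrow> 'a) \<Rightarrow> ('a \<Rightarrow> 'a)" where
  "fsub R u w = (\<lambda>y. u y \<ominus>\<^bsub>R\<^esub> w y)"

definition fsmult :: "('a, 'b) ring_scheme \<Rightarrow> 'a \<Rightarrow> ('a \<Rightarrow> 'a) \<Rightarrow> ('a \<Rightarrow> 'a)" where
  "fsmult R a u = (\<lambda>y. a \<otimes>\<^bsub>R\<^esub> u y)"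

inductive_set kahler_rel :: "('a, 'b) ring_scheme \<Rightarrow> 'a set \<Rightarrow> ('a \<Rightarrow> 'a) set"
  for R :: "('a, 'b) ring_scheme" and S :: "'a set" where
  zero: "(\<lambda>_. \<zero>\<^bsub>R\<^esub>) \<in> kahler_rel R S"
| add_rel: "x \<in> carrier R \<Longrightarrow> y \<in> carrier R \<Longrightarrow>
     fsub R (fdelta R (x \<oplus>\<^bsub>R\<^esub> y)) (fadd R (fdelta R x) (fdelta R y)) \<in> kahler_rel R S"
| mult_rel: "x \<in> carrier R \<Longrightarrow> y \<in> carrier R \<Longrightarrow>
     fsub R (fdelta R (x \<otimes>\<^bsub>R\<^esub> y))
       (fadd R (fsmult R x (fdelta R y)) (fsmult R y (fdelta R x))) \<in> kahler_rel R S"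
| base_rel: "s \<in> S \<Longrightarrow> fdelta R s \<in> kahler_rel R S"
| sum: "u \<in> kahler_rel R S \<Longrightarrow> w \<in> kahler_rel R S \<Longrightarrow> fadd R u w \<in> kahler_rel R S"
| smult: "a \<in> carrier R \<Longrightarrow> u \<in> kahler_rel R S \<Longrightarrow> fsmult R a u \<in> kahler_rel R S"

text \<open>\<open>\<Omega>_{A/S} = 0\<close>: the quotient of the free module by the relation submodule is
  trivial, i.e. every generator \<open>dx\<close> lies in the relation submodule.\<close>
definition kahler_zero :: "('a, 'b) ring_scheme \<Rightarrow> 'a set \<Rightarrow> bool" where
  "kahler_zero R S \<longleftrightarrow> (\<forall>x\<in>carrier R. fdelta R x \<in> kahler_rel R S)"

end

theory Submission
  imports Defs "HOL-Computational_Algebra.Primes" "HOL-Library.Function_Algebras"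
begin

text \<open>Let \<open>p\<close> be the characteristic of \<open>k\<close> and \<open>B\<close> a finite set spanning \<open>k\<close> over \<open>k^p\<close>.
  Completeness makes every finite \<open>k^p\<close>-span closed, so the coordinates in
  \<open>a = \<Sum>b. c_b^p b\<close> can be chosen with \<open>|c_b|^p \<le> C |a|\<close>. Writing each multi-index as
  \<open>p \<mu> + j\<close> with \<open>0 \<le> j < p\<close> and expanding the coefficients \<open>f_(p \<mu> + j)\<close> along \<open>B\<close>
  gives \<open>f = \<Sum>j b. b T^j g_(j,b)^p\<close>, and the coordinate bound keeps every \<open>g_(j,b)\<close>
  in \<open>k{r^-1 T}\<close>. As \<open>b T^j \<in> k[T]\<close> and \<open>d(g^p) = p g^(p-1) dg = 0\<close>, every \<open>df\<close> vanishes.\<close>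

section \<open>Non-archimedean absolute values\<close>

context
  fixes v :: "'a::field \<Rightarrow> real"
  assumes v: "nonarch_abs v"
begin

lemma nonarch_abs_nonneg: "v x \<ge> 0"
  using v by (simp add: nonarch_abs_def)

lemma nonarch_abs_eq_0_iff: "v x = 0 \<longleftrightarrow> x = 0"
  using v by (simp add: nonarch_abs_def)

lemma nonarch_abs_mult: "v (x * y) = v x * v y"
  using v by (simp add: nonarch_abs_def)

lemma nonarch_abs_add_le_max: "v (x + y) \<le> max (v x) (v y)"
  using v by (simp add: nonarch_abs_def)

lemma nonarch_abs_zero [simp]: "v 0 = 0"
  by (simp add: nonarch_abs_eq_0_iff)

lemma nonarch_abs_one [simp]: "v 1 = 1"
proof -
  have "v 1 = v 1 * v 1" using nonarch_abs_mult[of 1 1] by simp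
  moreover have "v 1 \<noteq> 0" by (simp add: nonarch_abs_eq_0_iff)
  ultimately show ?thesis by simp
qed

lemma nonarch_abs_minus [simp]: "v (- x) = v x"
proof -
  have "v (- 1) * v (- 1) = 1" using nonarch_abs_mult[of "- 1" "- 1"] by simp
  then have "v (- 1) = 1"
    using nonarch_abs_nonneg[of "- 1"] by (metis power2_eq_square abs_of_nonneg abs_square_eq_1)
  then show ?thesis using nonarch_abs_mult[of "- 1" x] by simp
qed

lemma nonarch_abs_minus_commute: "v (x - y) = v (y - x)"
  by (metis minus_diff_eq nonarch_abs_minus)

lemma nonarch_abs_power: "v (x ^ n) = v x ^ n"
  by (induction n) (simp_all add: nonarch_abs_mult)

lemma nonarch_abs_triangle: "v (x + y) \<le> v x + v y"
  using nonarch_abs_add_le_max[of x y] nonarch_abs_nonneg[of x] nonarch_abs_nonneg[of y] by linarith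

lemma nonarch_abs_sum_le: "v (sum f K) \<le> (\<Sum>k\<in>K. v (f k))"
  by (induction K rule: infinite_finite_induct)
     (auto intro: order_trans[OF nonarch_abs_triangle])

lemma nonarch_abs_sum_less:
  assumes "\<And>k. k \<in> K \<Longrightarrow> v (f k) < M" and "M > 0"
  shows "v (sum f K) < M"
  using assms(1)
proof (induction K rule: infinite_finite_induct)
  case (insert x F)
  then have "v (f x) < M" "v (sum f F) < M" by auto
  then show ?case
    using nonarch_abs_add_le_max[of "f x" "sum f F"] insert.hyps by (simp add: le_less_trans)
qed (simp_all add: assms(2))

end

section \<open>Spans over \<open>p\<close>-th powers\<close>

lemma power_CHAR_diff:
  assumes "CHAR('a::field) > 0"
  shows "(x - y :: 'a) ^ CHAR('a) = x ^ CHAR('a) - y ^ CHAR('a)"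
  using freshmans_dream[OF prime_CHAR_semidom[OF assms] refl, of "x - y" y] by simp

definition pth_power_span :: "'a::field set \<Rightarrow> 'a set" where
  "pth_power_span B = {a. \<exists>c. a = (\<Sum>b\<in>B. c b ^ CHAR('a) * b)}"

definition bounded_pth_power_coords :: "('a::field \<Rightarrow> real) \<Rightarrow> 'a set \<Rightarrow> real \<Rightarrow> bool" where
  "bounded_pth_power_coords v B C \<longleftrightarrow>
     (\<forall>a\<in>pth_power_span B. \<exists>c. a = (\<Sum>b\<in>B. c b ^ CHAR('a) * b) \<and> (\<forall>b\<in>B. v (c b) ^ CHAR('a) \<le> C * v a))"

lemma pth_power_spanI: "a = (\<Sum>b\<in>B. c b ^ CHAR('a) * b) \<Longrightarrow> (a :: 'a::field) \<in> pth_power_span B"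
  unfolding pth_power_span_def by blast

lemma pth_power_span_add:
  assumes "CHAR('a::field) > 0" "x \<in> pth_power_span B" "y \<in> pth_power_span B"
  shows "x + y \<in> pth_power_span (B :: 'a set)"
proof -
  obtain c d where "x = (\<Sum>b\<in>B. c b ^ CHAR('a) * b)" "y = (\<Sum>b\<in>B. d b ^ CHAR('a) * b)"
    using assms(2,3) unfolding pth_power_span_def by blast
  then have "x + y = (\<Sum>b\<in>B. (c b + d b) ^ CHAR('a) * b)"
    using freshmans_dream[OF prime_CHAR_semidom[OF assms(1)] refl]
    by (simp add: sum.distrib distrib_right)
  then show ?thesis by (rule pth_power_spanI)
qed

lemma pth_power_span_scale:
  assumes "x \<in> pth_power_span B"
  shows "l ^ CHAR('a) * x \<in> pth_power_span (B :: 'a::field set)"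
proof -
  obtain c where "x = (\<Sum>b\<in>B. c b ^ CHAR('a) * b)"
    using assms unfolding pth_power_span_def by blast
  then have "l ^ CHAR('a) * x = (\<Sum>b\<in>B. (l * c b) ^ CHAR('a) * b)"
    by (simp add: sum_distrib_left power_mult_distrib mult.assoc)
  then show ?thesis by (rule pth_power_spanI)
qed

lemma pth_power_span_diff:
  assumes "CHAR('a::field) > 0" "x \<in> pth_power_span B" "y \<in> pth_power_span B"
  shows "x - y \<in> pth_power_span (B :: 'a set)"
proof -
  obtain c d where "x = (\<Sum>b\<in>B. c b ^ CHAR('a) * b)" "y = (\<Sum>b\<in>B. d b ^ CHAR('a) * b)"
    using assms(2,3) unfolding pth_power_span_def by blast
  then have "x - y = (\<Sum>b\<in>B. (c b - d b) ^ CHAR('a) * b)"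
    using power_CHAR_diff[OF assms(1)] by (simp add: sum_subtractf left_diff_distrib)
  then show ?thesis by (rule pth_power_spanI)
qed

lemma tendsto_zero_of_power_bound:
  fixes x y :: "nat \<Rightarrow> real"
  assumes "p > 0" "\<And>k. 0 \<le> x k" "\<And>k. x k ^ p \<le> y k" "y \<longlonglongrightarrow> 0"
  shows "x \<longlonglongrightarrow> 0"
proof (rule tendsto_sandwich[of "\<lambda>_. 0" _ _ "\<lambda>k. root p (y k)"])
  have "x k \<le> root p (y k)" for k
    using real_root_le_iff[of p "x k ^ p" "y k"] real_root_power_cancel[of p "x k"] assms(1-3)
    by simp
  then show "\<forall>\<^sub>F k in sequentially. x k \<le> root p (y k)"
    by (simp add: always_eventually)
  show "(\<lambda>k. root p (y k)) \<longlonglongrightarrow> 0"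
    using tendsto_real_root[OF assms(4), of p] by simp
qed (use assms(2) in auto)

lemma pth_power_span_insert:
  fixes B :: "'a::field set"
  assumes "finite B" "e \<notin> B" "a \<in> pth_power_span (insert e B)"
  obtains l w where "w \<in> pth_power_span B" "a = l ^ CHAR('a) * e + w"
proof -
  obtain c where "a = (\<Sum>b\<in>insert e B. c b ^ CHAR('a) * b)"
    using assms(3) unfolding pth_power_span_def by blast
  then have "a = c e ^ CHAR('a) * e + (\<Sum>b\<in>B. c b ^ CHAR('a) * b)"
    using assms(1,2) by simp
  with that show thesis by (blast intro: pth_power_spanI)
qed

lemma sum_insert_fun_upd:
  assumes "finite B" "e \<notin> B"
  shows "(\<Sum>b\<in>insert e B. (c(e := l)) b ^ n * b) = l ^ n * e + (\<Sum>b\<in>B. c b ^ n * (b :: 'a::comm_semiring_1))"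
proof -
  have "(\<Sum>b\<in>B. (c(e := l)) b ^ n * b) = (\<Sum>b\<in>B. c b ^ n * b)"
    using assms(2) by (intro sum.cong) auto
  with assms show ?thesis by simp
qed

context
  fixes v :: "'a::field \<Rightarrow> real"
  assumes v: "nonarch_abs v" and complete: "abs_complete v"
begin

lemma nonarch_abs_series_converges:
  assumes "(\<lambda>k. v (c k)) \<longlonglongrightarrow> 0"
  obtains L where "(\<lambda>n. v ((\<Sum>k<n. c k) - L)) \<longlonglongrightarrow> 0"
proof -
  have "\<exists>N. \<forall>m\<ge>N. \<forall>n\<ge>N. v ((\<Sum>k<m. c k) - (\<Sum>k<n. c k)) < \<epsilon>" if "\<epsilon> > 0" for \<epsilon>
  proof -
    obtain N where N: "\<And>k. k \<ge> N \<Longrightarrow> v (c k) < \<epsilon>"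
      using assms \<open>\<epsilon> > 0\<close> nonarch_abs_nonneg[OF v] unfolding LIMSEQ_def by force
    have "v ((\<Sum>k<m. c k) - (\<Sum>k<n. c k)) < \<epsilon>" if "N \<le> n" "n \<le> m" for m n
    proof -
      have "(\<Sum>k<m. c k) - (\<Sum>k<n. c k) = (\<Sum>k\<in>{n..<m}. c k)"
        using sum.atLeastLessThan_concat[OF le0 \<open>n \<le> m\<close>, of c] unfolding lessThan_atLeast0
        by (metis add_diff_cancel_left')
      also have "v \<dots> < \<epsilon>"
        using N that \<open>\<epsilon> > 0\<close> by (intro nonarch_abs_sum_less[OF v]) auto
      finally show ?thesis .
    qed
    then show ?thesis
      by (metis nle_le nonarch_abs_minus_commute[OF v])
  qed
  then show ?thesis
    using complete[unfolded abs_complete_def, rule_format, of "\<lambda>n. \<Sum>k<n. c k"] that by blast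
qed

lemma pth_power_span_limit:
  assumes "CHAR('a) > 0"
    and "\<And>n. w n = (\<Sum>b\<in>B. s n b ^ CHAR('a) * b)"
    and "\<And>b. b \<in> B \<Longrightarrow> (\<lambda>n. v (s n b - L b)) \<longlonglongrightarrow> 0"
    and "(\<lambda>n. v (e - w n)) \<longlonglongrightarrow> 0"
  shows "e = (\<Sum>b\<in>B. L b ^ CHAR('a) * b)"
proof -
  define p where "p = CHAR('a)"
  define E where "E = (\<Sum>b\<in>B. L b ^ p * b)"
  have wE: "v (w n - E) \<le> (\<Sum>b\<in>B. v (s n b - L b) ^ p * v b)" for n
  proof -
    have "w n - E = (\<Sum>b\<in>B. (s n b - L b) ^ p * b)"
      using assms(2) power_CHAR_diff[OF assms(1)]
      by (simp add: E_def p_def sum_subtractf left_diff_distrib)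
    then show ?thesis
      using nonarch_abs_sum_le[OF v, of "\<lambda>b. (s n b - L b) ^ p * b" B]
      by (simp add: nonarch_abs_mult[OF v] nonarch_abs_power[OF v])
  qed
  have bound: "v (e - E) \<le> v (e - w n) + (\<Sum>b\<in>B. v (s n b - L b) ^ p * v b)" for n
    using nonarch_abs_triangle[OF v, of "e - w n" "w n - E"] wE[of n] by simp
  have "p > 0" using assms(1) by (simp add: p_def)
  have "(\<lambda>n. v (e - w n) + (\<Sum>b\<in>B. v (s n b - L b) ^ p * v b)) \<longlonglongrightarrow> 0 + (\<Sum>b\<in>B. 0 ^ p * v b)"
    using assms(3,4) by (intro tendsto_add tendsto_sum tendsto_mult tendsto_power tendsto_const) auto
  then have "(\<lambda>n. v (e - w n) + (\<Sum>b\<in>B. v (s n b - L b) ^ p * v b)) \<longlonglongrightarrow> 0"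
    using \<open>p > 0\<close> by (simp add: power_0_left)
  then have "v (e - E) \<le> 0"
    by (rule LIMSEQ_le_const) (use bound in auto)
  then show ?thesis
    using nonarch_abs_nonneg[OF v, of "e - E"] nonarch_abs_eq_0_iff[OF v, of "e - E"]
    by (simp add: E_def p_def)
qed

lemma pth_power_span_coords_converge:
  assumes char: "CHAR('a) > 0" and bounded: "bounded_pth_power_coords v B C" "C \<ge> 0"
    and w: "\<And>n. w n \<in> pth_power_span B" and step: "\<And>n. v (w (Suc n) - w n) < (1/2) ^ n"
  obtains s L where "\<And>n. w n = (\<Sum>b\<in>B. s n b ^ CHAR('a) * b)"
    and "\<And>b. b \<in> B \<Longrightarrow> (\<lambda>n. v (s n b - L b)) \<longlonglongrightarrow> 0"
proof -
  define p where "p = CHAR('a)"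
  have p: "p > 0" using char by (simp add: p_def)
  have "\<exists>c. w (Suc n) - w n = (\<Sum>b\<in>B. c b ^ p * b) \<and> (\<forall>b\<in>B. v (c b) ^ p \<le> C * v (w (Suc n) - w n))"
    for n
    using bounded(1) pth_power_span_diff[OF char w w]
    unfolding bounded_pth_power_coords_def p_def by blast
  then obtain c where c: "\<And>n. w (Suc n) - w n = (\<Sum>b\<in>B. c n b ^ p * b)"
    "\<And>n b. b \<in> B \<Longrightarrow> v (c n b) ^ p \<le> C * v (w (Suc n) - w n)"
    by metis
  obtain c\<^sub>0 where c\<^sub>0: "w 0 = (\<Sum>b\<in>B. c\<^sub>0 b ^ p * b)"
    using w[of 0] unfolding pth_power_span_def p_def by blast
  define s where "s n b = c\<^sub>0 b + (\<Sum>k<n. c k b)" for n b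
  have "w n = (\<Sum>b\<in>B. s n b ^ p * b)" for n
  proof (induction n)
    case (Suc n)
    have "w (Suc n) = w n + (w (Suc n) - w n)" by simp
    also have "\<dots> = w n + (\<Sum>b\<in>B. c n b ^ p * b)" by (simp only: c(1))
    also have "\<dots> = (\<Sum>b\<in>B. (s n b ^ p + c n b ^ p) * b)"
      unfolding Suc by (simp add: sum.distrib distrib_right)
    also have "\<dots> = (\<Sum>b\<in>B. s (Suc n) b ^ p * b)"
      using freshmans_dream[OF prime_CHAR_semidom[OF char] p_def]
      by (simp add: s_def add.assoc)
    finally show ?case .
  qed (simp add: s_def c\<^sub>0)
  moreover have "\<exists>L. (\<lambda>n. v ((\<Sum>k<n. c k b) - L)) \<longlonglongrightarrow> 0" if "b \<in> B" for b
  proof -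
    have "v (c k b) ^ p \<le> C * (1/2) ^ k" for k
      using c(2)[OF that, of k] mult_left_mono[OF less_imp_le[OF step[of k]] bounded(2)]
      by (rule order_trans)
    moreover have "(\<lambda>k. C * (1/2) ^ k) \<longlonglongrightarrow> 0"
      by (intro tendsto_mult_right_zero LIMSEQ_power_zero) simp
    ultimately have "(\<lambda>k. v (c k b)) \<longlonglongrightarrow> 0"
      by (rule tendsto_zero_of_power_bound[OF p nonarch_abs_nonneg[OF v]])
    then show ?thesis by (rule nonarch_abs_series_converges) blast
  qed
  then obtain L where "\<And>b. b \<in> B \<Longrightarrow> (\<lambda>n. v ((\<Sum>k<n. c k b) - L b)) \<longlonglongrightarrow> 0"
    by metis
  ultimately show thesis
    using that[of s "\<lambda>b. c\<^sub>0 b + L b"] by (simp add: p_def s_def)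
qed

lemma pth_power_span_closed:
  assumes char: "CHAR('a) > 0" and bounded: "bounded_pth_power_coords v B C" "C \<ge> 0"
    and w: "\<And>n. w n \<in> pth_power_span B" and close: "\<And>n. v (e - w n) < (1/2) ^ n"
  shows "e \<in> pth_power_span B"
proof -
  have step: "v (w (Suc n) - w n) < (1/2) ^ n" for n
  proof -
    have "v (w (Suc n) - w n) \<le> max (v (e - w n)) (v (e - w (Suc n)))"
      using nonarch_abs_add_le_max[OF v, of "e - w n" "w (Suc n) - e"]
      by (simp add: nonarch_abs_minus_commute[OF v, of "w (Suc n)"])
    moreover have "(1/2::real) ^ Suc n \<le> (1/2) ^ n" by (rule power_decreasing) auto
    ultimately show ?thesis using close[of n] close[of "Suc n"] by linarith
  qed
  obtain s L where ws: "\<And>n. w n = (\<Sum>b\<in>B. s n b ^ CHAR('a) * b)"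
    and L: "\<And>b. b \<in> B \<Longrightarrow> (\<lambda>n. v (s n b - L b)) \<longlonglongrightarrow> 0"
    using pth_power_span_coords_converge[OF char bounded w step] by blast
  have "(\<lambda>n. v (e - w n)) \<longlonglongrightarrow> 0"
  proof (rule tendsto_sandwich[of "\<lambda>_. 0" _ _ "\<lambda>n. (1/2) ^ n"])
    show "\<forall>\<^sub>F n in sequentially. v (e - w n) \<le> (1/2) ^ n"
      using close by (simp add: always_eventually less_imp_le)
    show "(\<lambda>n. (1/2::real) ^ n) \<longlonglongrightarrow> 0" by (rule LIMSEQ_power_zero) simp
  qed (simp_all add: nonarch_abs_nonneg[OF v])
  with char ws L have "e = (\<Sum>b\<in>B. L b ^ CHAR('a) * b)"
    by (rule pth_power_span_limit)
  then show ?thesis by (rule pth_power_spanI)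
qed

lemma pth_power_span_dist_pos:
  assumes "CHAR('a) > 0" "bounded_pth_power_coords v B C" "C \<ge> 0" "e \<notin> pth_power_span B"
  obtains \<delta> where "\<delta> > 0" "\<And>w. w \<in> pth_power_span B \<Longrightarrow> \<delta> \<le> v (e - w)"
proof -
  have "\<exists>\<delta>>0. \<forall>w\<in>pth_power_span B. \<delta> \<le> v (e - w)"
  proof (rule ccontr)
    assume "\<not> ?thesis"
    then have "\<forall>n. \<exists>w\<in>pth_power_span B. v (e - w) < (1/2) ^ n"
      by (metis not_le zero_less_divide_1_iff zero_less_numeral zero_less_power)
    then obtain w where "\<And>n. w n \<in> pth_power_span B" "\<And>n. v (e - w n) < (1/2) ^ n"
      by metis
    with assms(1-3) have "e \<in> pth_power_span B" by (rule pth_power_span_closed)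
    with assms(4) show False ..
  qed
  with that show thesis by blast
qed

lemma pth_power_span_new_coord_bound:
  assumes "CHAR('a) > 0" "\<delta> > 0" "\<And>w. w \<in> pth_power_span B \<Longrightarrow> \<delta> \<le> v (e - w)"
    and "w \<in> pth_power_span B"
  shows "v l ^ CHAR('a) * \<delta> \<le> v (l ^ CHAR('a) * e + w)"
proof (cases "l = 0")
  case True
  then show ?thesis using assms(1) nonarch_abs_nonneg[OF v] by (simp add: power_0_left nonarch_abs_zero[OF v])
next
  case False
  define w' where "w' = 0 - inverse l ^ CHAR('a) * w"
  have "0 \<in> pth_power_span B" by (rule pth_power_spanI[where c = "\<lambda>_. 0"]) (use assms(1) in \<open>simp add: power_0_left\<close>)
  then have "w' \<in> pth_power_span B"
    unfolding w'_def using assms(1,4) by (intro pth_power_span_diff pth_power_span_scale)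
  moreover have "l ^ CHAR('a) * e + w = l ^ CHAR('a) * (e - w')"
    using False by (simp add: w'_def algebra_simps power_inverse[symmetric] flip: power_mult_distrib)
  ultimately show ?thesis
    using assms(3) nonarch_abs_nonneg[OF v, of l]
    by (simp add: nonarch_abs_mult[OF v] nonarch_abs_power[OF v] mult_left_mono)
qed

lemma pth_power_span_insert_bound:
  assumes char: "CHAR('a) > 0" and "finite B" "e \<notin> B"
    and \<delta>: "\<delta> > 0" "\<And>w. w \<in> pth_power_span B \<Longrightarrow> \<delta> \<le> v (e - w)"
    and a: "a \<in> pth_power_span (insert e B)"
  shows "\<exists>l w. w \<in> pth_power_span B \<and> a = l ^ CHAR('a) * e + w \<and>
    v l ^ CHAR('a) \<le> (1 / \<delta>) * v a \<and> v w \<le> max 1 (v e / \<delta>) * v a"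
proof -
  define K where "K = max 1 (v e / \<delta>)"
  obtain l w where w: "w \<in> pth_power_span B" "a = l ^ CHAR('a) * e + w"
    using pth_power_span_insert[OF assms(2,3) a] .
  have "v l ^ CHAR('a) * \<delta> \<le> v a"
    using pth_power_span_new_coord_bound[OF char \<delta> w(1)] w(2) by simp
  then have l: "v l ^ CHAR('a) \<le> (1 / \<delta>) * v a"
    using \<delta>(1) by (simp add: pos_le_divide_eq)
  have "v w \<le> max (v a) (v (l ^ CHAR('a) * e))"
    using nonarch_abs_add_le_max[OF v, of a "- (l ^ CHAR('a) * e)"] w(2)
    by (simp add: nonarch_abs_minus[OF v])
  moreover have "v (l ^ CHAR('a) * e) \<le> (v e / \<delta>) * v a"
    using mult_right_mono[OF l nonarch_abs_nonneg[OF v, of e]]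
    by (simp add: nonarch_abs_mult[OF v] nonarch_abs_power[OF v] mult.commute)
  moreover have "1 * v a \<le> K * v a" "(v e / \<delta>) * v a \<le> K * v a"
    unfolding K_def using nonarch_abs_nonneg[OF v, of a]
    by (intro mult_right_mono; simp)+
  ultimately have "v w \<le> K * v a" by linarith
  with w l show ?thesis unfolding K_def by blast
qed

lemma bounded_pth_power_coords_insert:
  assumes "finite B" "e \<notin> B" "bounded_pth_power_coords v B C" "C \<ge> 0"
    and split: "\<And>a. a \<in> pth_power_span (insert e B) \<Longrightarrow> \<exists>l w. w \<in> pth_power_span B \<and>
      a = l ^ CHAR('a) * e + w \<and> v l ^ CHAR('a) \<le> D * v a \<and> v w \<le> K * v a"
  shows "bounded_pth_power_coords v (insert e B) (max D (C * K))"
  unfolding bounded_pth_power_coords_def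
proof
  fix a assume "a \<in> pth_power_span (insert e B)"
  then obtain l w where w: "w \<in> pth_power_span B" "a = l ^ CHAR('a) * e + w"
    and bounds: "v l ^ CHAR('a) \<le> D * v a" "v w \<le> K * v a"
    using split by blast
  obtain c where c: "w = (\<Sum>b\<in>B. c b ^ CHAR('a) * b)" "\<And>b. b \<in> B \<Longrightarrow> v (c b) ^ CHAR('a) \<le> C * v w"
    using assms(3) w(1) unfolding bounded_pth_power_coords_def by blast
  have "v a \<ge> 0" by (rule nonarch_abs_nonneg[OF v])
  have "v ((c(e := l)) b) ^ CHAR('a) \<le> max D (C * K) * v a" if "b \<in> insert e B" for b
  proof (cases "b = e")
    case True
    then show ?thesis
      using bounds(1) mult_right_mono[OF max.cobounded1[of D "C * K"] \<open>v a \<ge> 0\<close>] by simp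
  next
    case False
    then have "v ((c(e := l)) b) ^ CHAR('a) \<le> C * (K * v a)"
      using that c(2) mult_left_mono[OF bounds(2) assms(4)] by force
    also have "\<dots> \<le> max D (C * K) * v a"
      using mult_right_mono[OF max.cobounded2[of "C * K" D] \<open>v a \<ge> 0\<close>] by simp
    finally show ?thesis .
  qed
  moreover have "a = (\<Sum>b\<in>insert e B. (c(e := l)) b ^ CHAR('a) * b)"
    by (simp only: sum_insert_fun_upd[OF assms(1,2)] w(2) c(1))
  ultimately show "\<exists>c. a = (\<Sum>b\<in>insert e B. c b ^ CHAR('a) * b) \<and>
      (\<forall>b\<in>insert e B. v (c b) ^ CHAR('a) \<le> max D (C * K) * v a)"
    by blast
qed

text \<open>The analogue of the equivalence of norms on a finite-dimensional space over a complete
  field.\<close>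
lemma bounded_pth_power_coords_exists:
  assumes char: "CHAR('a) > 0" and "finite B"
  shows "\<exists>C>0. bounded_pth_power_coords v B C"
  using assms(2)
proof (induction B rule: finite_induct)
  case empty
  have "pth_power_span {} = {0 :: 'a}" by (simp add: pth_power_span_def)
  then show ?case by (intro exI[of _ 1]) (simp add: bounded_pth_power_coords_def)
next
  case (insert e B)
  obtain C where C: "C > 0" "bounded_pth_power_coords v B C"
    using insert.IH by blast
  show ?case
  proof (cases "e \<in> pth_power_span B")
    case True
    have "\<exists>l w. w \<in> pth_power_span B \<and> a = l ^ CHAR('a) * e + w \<and> v l ^ CHAR('a) \<le> 1 * v a \<and> v w \<le> 1 * v a"
      if a: "a \<in> pth_power_span (insert e B)" for a
    proof -
      obtain l w where "w \<in> pth_power_span B" "a = l ^ CHAR('a) * e + w"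
        using pth_power_span_insert[OF insert.hyps a] .
      then have "a \<in> pth_power_span B"
        using True char by (simp add: pth_power_span_add pth_power_span_scale)
      then show ?thesis
        using char nonarch_abs_nonneg[OF v, of a]
        by (intro exI[of _ "0 :: 'a"] exI[of _ a]) (simp add: power_0_left nonarch_abs_zero[OF v])
    qed
    from bounded_pth_power_coords_insert[OF insert.hyps C(2) _ this] C(1)
    show ?thesis by (intro exI[of _ "max 1 (C * 1)"]) simp
  next
    case False
    obtain \<delta> where \<delta>: "\<delta> > 0" "\<And>w. w \<in> pth_power_span B \<Longrightarrow> \<delta> \<le> v (e - w)"
      using pth_power_span_dist_pos[OF char C(2) _ False] C(1) by auto
    define K where "K = max 1 (v e / \<delta>)"
    have "\<exists>l w. w \<in> pth_power_span B \<and> a = l ^ CHAR('a) * e + w \<and>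
        v l ^ CHAR('a) \<le> (1 / \<delta>) * v a \<and> v w \<le> K * v a"
      if "a \<in> pth_power_span (insert e B)" for a
      unfolding K_def by (rule pth_power_span_insert_bound[OF char insert.hyps \<delta> that])
    from bounded_pth_power_coords_insert[OF insert.hyps C(2) _ this] C(1) \<delta>(1)
    show ?thesis by (intro exI[of _ "max (1 / \<delta>) (C * K)"]) (simp add: less_max_iff_disj)
  qed
qed

end

section \<open>Multivariate formal power series\<close>

lemma finite_atMost_multi_index: "finite {..\<nu> :: 'n::finite \<Rightarrow> nat}"
  by (rule finite_subset[OF _ finite_PiE[of UNIV "\<lambda>i. {..\<nu> i}"]])
     (auto simp: le_fun_def PiE_def extensional_def)

lemma multi_index_diff_diff: "\<mu> \<le> \<nu> \<Longrightarrow> \<nu> - (\<nu> - \<mu>) = (\<mu> :: 'n \<Rightarrow> nat)"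
  by (simp add: le_fun_def fun_eq_iff)

lemma multi_index_add_diff: "\<mu> \<le> \<nu> \<Longrightarrow> \<mu> + (\<nu> - \<mu>) = (\<nu> :: 'n \<Rightarrow> nat)"
  by (simp add: le_fun_def fun_eq_iff)

lemma pser_mult_atMost: "pser_mult f g \<nu> = (\<Sum>\<mu>\<in>{..\<nu>}. f \<mu> * g (\<nu> - \<mu>))"
  by (simp add: pser_mult_def atMost_def le_fun_def fun_diff_def)

lemma pser_mult_commute: "pser_mult f g = pser_mult g f"
proof
  fix \<nu>
  show "pser_mult f g \<nu> = pser_mult g f \<nu>"
    unfolding pser_mult_atMost
    by (rule sum.reindex_bij_witness[where i="\<lambda>\<mu>. \<nu> - \<mu>" and j="\<lambda>\<mu>. \<nu> - \<mu>"])
       (auto simp: multi_index_diff_diff mult.commute le_fun_def)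
qed

lemma pser_mult_assoc:
  fixes f g h :: "('n::finite, 'a::field) pser"
  shows "pser_mult (pser_mult f g) h = pser_mult f (pser_mult g h)"
proof
  fix \<nu> :: "'n \<Rightarrow> nat"
  have "pser_mult (pser_mult f g) h \<nu> =
        (\<Sum>(\<mu>, \<alpha>)\<in>Sigma {..\<nu>} atMost. f \<alpha> * g (\<mu> - \<alpha>) * h (\<nu> - \<mu>))"
    unfolding pser_mult_atMost sum_distrib_right
    by (rule sum.Sigma) (simp_all add: finite_atMost_multi_index)
  also have "\<dots> = (\<Sum>(\<alpha>, \<beta>)\<in>Sigma {..\<nu>} (\<lambda>\<alpha>. {..\<nu> - \<alpha>}). f \<alpha> * g \<beta> * h (\<nu> - \<alpha> - \<beta>))"
    by (rule sum.reindex_bij_witness[where i="\<lambda>(\<alpha>, \<beta>). (\<alpha> + \<beta>, \<alpha>)" and j="\<lambda>(\<mu>, \<alpha>). (\<alpha>, \<mu> - \<alpha>)"])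
       (auto simp: multi_index_add_diff diff_diff_eq,
        auto simp: le_fun_def le_diff_conv2 diff_le_mono add.commute intro: order_trans)
  also have "\<dots> = pser_mult f (pser_mult g h) \<nu>"
    unfolding pser_mult_atMost sum_distrib_left
    by (subst sum.Sigma) (simp_all add: finite_atMost_multi_index mult.assoc)
  finally show "pser_mult (pser_mult f g) h \<nu> = pser_mult f (pser_mult g h) \<nu>" .
qed

lemma pser_mult_add_left:
  "pser_mult (\<lambda>\<nu>. f \<nu> + g \<nu>) h = (\<lambda>\<nu>. pser_mult f h \<nu> + pser_mult g h \<nu>)"
  by (simp add: pser_mult_def fun_eq_iff sum.distrib distrib_right)

definition pser_monom :: "('n \<Rightarrow> nat) \<Rightarrow> 'a::zero \<Rightarrow> ('n, 'a) pser" where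
  "pser_monom \<alpha> a = (\<lambda>\<mu>. if \<mu> = \<alpha> then a else 0)"

lemma pser_mult_monom_left:
  "pser_mult (pser_monom \<alpha> a) h \<nu> = (if \<alpha> \<le> \<nu> then a * h (\<nu> - \<alpha>) else 0)"
  unfolding pser_mult_atMost pser_monom_def
  by (simp add: if_distrib[of "\<lambda>x. x * _"] sum.delta[OF finite_atMost_multi_index] cong: if_cong)

lemma pser_mult_one_left: "pser_mult (\<lambda>\<mu>. if \<mu> = 0 then 1 else 0) h = h"
  using pser_mult_monom_left[of 0 1 h] by (simp add: pser_monom_def fun_eq_iff)

typedef ('n, 'a) mfps = "UNIV :: ('n, 'a) pser set"
  morphisms mfps_nth Abs_mfps
  by simp

lemma mfps_nth_Abs_mfps [simp]: "mfps_nth (Abs_mfps f) = f"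
  by (simp add: Abs_mfps_inverse)

lemma mfps_eqI: "(\<And>\<nu>. mfps_nth f \<nu> = mfps_nth g \<nu>) \<Longrightarrow> f = g"
  using mfps_nth_inject by blast

instantiation mfps :: (finite, field) comm_ring_1
begin

definition "0 = Abs_mfps (\<lambda>_. 0)"
definition "1 = Abs_mfps (\<lambda>\<nu>. if \<nu> = 0 then 1 else 0)"
definition "f + g = Abs_mfps (\<lambda>\<nu>. mfps_nth f \<nu> + mfps_nth g \<nu>)"
definition "f - g = Abs_mfps (\<lambda>\<nu>. mfps_nth f \<nu> - mfps_nth g \<nu>)"
definition "- f = Abs_mfps (\<lambda>\<nu>. - mfps_nth f \<nu>)"
definition "f * g = Abs_mfps (pser_mult (mfps_nth f) (mfps_nth g))"

instance
proof
  fix a b c :: "('a, 'b) mfps"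
  show "a * b * c = a * (b * c)" by (simp add: times_mfps_def pser_mult_assoc)
  show "a * b = b * a" by (simp add: times_mfps_def pser_mult_commute)
  show "1 * a = a"
    by (simp add: times_mfps_def one_mfps_def pser_mult_one_left mfps_nth_inverse)
  show "(a + b) * c = a * c + b * c" by (simp add: times_mfps_def plus_mfps_def pser_mult_add_left)
  show "a + b + c = a + (b + c)" by (simp add: plus_mfps_def add.assoc)
  show "a + b = b + a" by (simp add: plus_mfps_def add.commute)
  show "0 + a = a" by (simp add: plus_mfps_def zero_mfps_def mfps_nth_inverse)
  show "- a + a = 0" by (simp add: plus_mfps_def zero_mfps_def uminus_mfps_def)
  show "a - b = a + - b" by (simp add: plus_mfps_def minus_mfps_def uminus_mfps_def)
  show "(0::('a, 'b) mfps) \<noteq> 1"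
    by (auto simp: zero_mfps_def one_mfps_def Abs_mfps_inject fun_eq_iff)
qed

end

lemma mfps_nth_zero [simp]: "mfps_nth 0 = (\<lambda>_. 0)"
  by (simp add: zero_mfps_def)

lemma mfps_nth_one: "mfps_nth 1 = (\<lambda>\<nu>. if \<nu> = 0 then 1 else 0)"
  by (simp add: one_mfps_def)

lemma mfps_nth_add [simp]: "mfps_nth (f + g) = (\<lambda>\<nu>. mfps_nth f \<nu> + mfps_nth g \<nu>)"
  by (simp add: plus_mfps_def)

lemma mfps_nth_mult: "mfps_nth (f * g) = pser_mult (mfps_nth f) (mfps_nth g)"
  by (simp add: times_mfps_def)

lemma mfps_nth_sum: "mfps_nth (sum f A) = (\<lambda>\<nu>. \<Sum>i\<in>A. mfps_nth (f i) \<nu>)"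
  by (induction A rule: infinite_finite_induct) simp_all

lemma mfps_nth_of_nat: "mfps_nth (of_nat n) = (\<lambda>\<nu>. if \<nu> = 0 then of_nat n else 0)"
  by (induction n) (auto simp: mfps_nth_one zero_fun_def)

lemma CHAR_mfps: "CHAR(('n::finite, 'a::field) mfps) = CHAR('a)"
proof (rule CHAR_eqI)
  show "of_nat CHAR('a) = (0 :: ('n, 'a) mfps)"
    by (rule mfps_eqI) (simp add: mfps_nth_of_nat)
next
  fix n assume "of_nat n = (0 :: ('n, 'a) mfps)"
  then have "mfps_nth (of_nat n :: ('n, 'a) mfps) 0 = 0" by simp
  then show "CHAR('a) dvd n" by (simp add: mfps_nth_of_nat of_nat_eq_0_iff_char_dvd)
qed

definition mfps_monom :: "('n \<Rightarrow> nat) \<Rightarrow> 'a::zero \<Rightarrow> ('n, 'a) mfps" where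
  "mfps_monom \<alpha> a = Abs_mfps (pser_monom \<alpha> a)"

lemma mfps_monom_mult: "mfps_monom \<alpha> a * mfps_monom \<beta> b = mfps_monom (\<alpha> + \<beta>) (a * b)"
  by (rule mfps_eqI)
     (simp add: mfps_monom_def mfps_nth_mult pser_mult_monom_left,
      auto simp: pser_monom_def le_fun_def fun_eq_iff, metis le_add_diff_inverse)

lemma mfps_monom_zero_one: "mfps_monom 0 1 = 1"
  by (rule mfps_eqI) (simp add: mfps_monom_def pser_monom_def mfps_nth_one)

lemma mfps_monom_power: "mfps_monom \<alpha> a ^ k = mfps_monom (\<lambda>i. k * \<alpha> i) (a ^ k)"
  by (induction k)
     (simp_all add: mfps_monom_zero_one[unfolded zero_fun_def] mfps_monom_mult plus_fun_def)

lemma mfps_nth_power_local: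
  assumes "\<And>\<mu>. \<mu> \<le> \<nu> \<Longrightarrow> mfps_nth f \<mu> = mfps_nth g \<mu>" and "\<mu> \<le> \<nu>"
  shows "mfps_nth (f ^ k) \<mu> = mfps_nth (g ^ k) \<mu>"
  using assms(2)
proof (induction k arbitrary: \<mu>)
  case (Suc k)
  have "mfps_nth f \<mu>' * mfps_nth (f ^ k) (\<mu> - \<mu>') = mfps_nth g \<mu>' * mfps_nth (g ^ k) (\<mu> - \<mu>')"
    if "\<mu>' \<in> {..\<mu>}" for \<mu>'
  proof -
    have "\<mu>' \<le> \<mu>" "\<mu> - \<mu>' \<le> \<mu>" using that by (simp_all add: le_fun_def)
    then have "\<mu>' \<le> \<nu>" "\<mu> - \<mu>' \<le> \<nu>" using Suc.prems by (auto intro: order_trans)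
    then show ?thesis using assms(1) Suc.IH by metis
  qed
  then show ?case
    unfolding power_Suc mfps_nth_mult pser_mult_atMost by (rule sum.cong[OF refl])
qed simp

text \<open>Truncating \<open>g\<close> below \<open>\<nu>\<close> does not change the coefficient at \<open>\<nu>\<close>, and on the
  resulting polynomial the Freshman's dream applies term by term.\<close>
lemma mfps_nth_power_CHAR:
  fixes g :: "('n::finite, 'a::field) mfps"
  assumes "CHAR('a) > 0"
  shows "mfps_nth (g ^ CHAR('a)) \<nu> =
    (if \<forall>i. CHAR('a) dvd \<nu> i then mfps_nth g (\<lambda>i. \<nu> i div CHAR('a)) ^ CHAR('a) else 0)"
proof -
  define p where "p = CHAR('a)"
  have p: "p > 0" "prime CHAR(('n, 'a) mfps)" "p = CHAR(('n, 'a) mfps)"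
    using assms prime_CHAR_semidom[OF assms] by (simp_all add: p_def CHAR_mfps)
  define T where "T = (\<Sum>\<mu>\<in>{..\<nu>}. mfps_monom \<mu> (mfps_nth g \<mu>))"
  have "mfps_nth T \<mu> = mfps_nth g \<mu>" if "\<mu> \<le> \<nu>" for \<mu>
    using that
    by (simp add: T_def mfps_nth_sum mfps_monom_def pser_monom_def
        sum.delta'[OF finite_atMost_multi_index] cong: if_cong)
  then have "mfps_nth (g ^ p) \<nu> = mfps_nth (T ^ p) \<nu>"
    by (intro mfps_nth_power_local) auto
  also have "T ^ p = (\<Sum>\<mu>\<in>{..\<nu>}. mfps_monom (\<lambda>i. p * \<mu> i) (mfps_nth g \<mu> ^ p))"
    unfolding T_def freshmans_dream_sum[OF p(2,3)] mfps_monom_power ..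
  also have "mfps_nth \<dots> \<nu> = (\<Sum>\<mu>\<in>{..\<nu>}. if \<nu> = (\<lambda>i. p * \<mu> i) then mfps_nth g \<mu> ^ p else 0)"
    by (simp add: mfps_nth_sum mfps_monom_def pser_monom_def)
  also have "\<dots> = (if \<forall>i. p dvd \<nu> i then mfps_nth g (\<lambda>i. \<nu> i div p) ^ p else 0)"
  proof (cases "\<forall>i. p dvd \<nu> i")
    case True
    define \<mu>\<^sub>0 where "\<mu>\<^sub>0 = (\<lambda>i. \<nu> i div p)"
    have "\<nu> = (\<lambda>i. p * \<mu> i) \<longleftrightarrow> \<mu> = \<mu>\<^sub>0" for \<mu>
      using True p(1) by (auto simp: \<mu>\<^sub>0_def fun_eq_iff dvd_mult_div_cancel)
    moreover have "\<mu>\<^sub>0 \<le> \<nu>" by (simp add: \<mu>\<^sub>0_def le_fun_def)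
    ultimately show ?thesis
      using True by (simp add: sum.delta[OF finite_atMost_multi_index] \<mu>\<^sub>0_def)
  next
    case False
    then have "\<nu> \<noteq> (\<lambda>i. p * \<mu> i)" for \<mu> by auto
    with False show ?thesis by (simp, blast)
  qed
  finally show ?thesis by (simp add: p_def)
qed

section \<open>The Tate algebra\<close>

definition multi_pow :: "('n::finite \<Rightarrow> real) \<Rightarrow> ('n \<Rightarrow> nat) \<Rightarrow> real" where
  "multi_pow r \<nu> = (\<Prod>i\<in>UNIV. r i ^ \<nu> i)"

lemma multi_pow_pos: "\<forall>i. r i > 0 \<Longrightarrow> multi_pow r \<nu> > 0"
  unfolding multi_pow_def by (intro prod_pos) auto

lemma multi_pow_add: "multi_pow r (\<alpha> + \<beta>) = multi_pow r \<alpha> * multi_pow r \<beta>"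
  unfolding multi_pow_def by (simp add: power_add prod.distrib)

lemma multi_pow_scale: "multi_pow r (\<lambda>i. k * \<mu> i) = multi_pow r \<mu> ^ k"
  unfolding multi_pow_def prod_power_distrib
  by (rule prod.cong) (simp_all add: power_mult[symmetric] mult.commute)

lemma tate_ring_simps:
  "x \<oplus>\<^bsub>tate_ring v r\<^esub> y = (\<lambda>\<nu>. x \<nu> + y \<nu>)"
  "x \<otimes>\<^bsub>tate_ring v r\<^esub> y = pser_mult x y"
  "\<zero>\<^bsub>tate_ring v r\<^esub> = (\<lambda>_. 0)"
  "\<one>\<^bsub>tate_ring v r\<^esub> = (\<lambda>\<nu>. if \<nu> = 0 then 1 else 0)"
  by (simp_all add: tate_ring_def zero_fun_def)

lemma tate_ring_nat_pow: "x [^]\<^bsub>tate_ring v r\<^esub> k = mfps_nth (Abs_mfps x ^ k)"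
  by (induction k) (simp_all add: tate_ring_def mfps_nth_one mfps_nth_mult zero_fun_def pser_mult_commute)

lemma tate_ring_add_pow_one: "[n] \<cdot>\<^bsub>tate_ring v r\<^esub> \<one>\<^bsub>tate_ring v r\<^esub> = mfps_nth (of_nat n)"
  by (induction n) (simp_all add: add_pow_def tate_ring_def mfps_nth_of_nat mfps_nth_one zero_fun_def fun_eq_iff)

context
  fixes v :: "'a::field \<Rightarrow> real" and r :: "'n::finite \<Rightarrow> real"
  assumes v: "nonarch_abs v" and r: "\<forall>i. r i > 0"
begin

lemma tate_ring_carrier_iff:
  "f \<in> carrier (tate_ring v r) \<longleftrightarrow> (\<forall>e>0. finite {\<nu>. e \<le> v (f \<nu>) * multi_pow r \<nu>})"
proof -
  have nonneg: "v (f \<nu>) * multi_pow r \<nu> \<ge> 0" for \<nu>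
    using nonarch_abs_nonneg[OF v] multi_pow_pos[OF r] by (simp add: less_imp_le)
  have "((\<lambda>\<nu>. v (f \<nu>) * multi_pow r \<nu>) \<longlongrightarrow> 0) cofinite \<longleftrightarrow>
      (\<forall>e>0. eventually (\<lambda>\<nu>. dist (v (f \<nu>) * multi_pow r \<nu>) 0 < e) cofinite)"
    by (rule tendsto_iff)
  also have "\<dots> \<longleftrightarrow> (\<forall>e>0. finite {\<nu>. e \<le> v (f \<nu>) * multi_pow r \<nu>})"
    using nonneg by (simp add: eventually_cofinite not_less)
  finally show ?thesis by (simp add: tate_ring_def multi_pow_def)
qed

lemma tate_ring_carrier_finite_support:
  assumes "finite {\<nu>. f \<nu> \<noteq> 0}"
  shows "f \<in> carrier (tate_ring v r)"
  unfolding tate_ring_carrier_iff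
proof (intro allI impI)
  fix e :: real assume "e > 0"
  then have "{\<nu>. e \<le> v (f \<nu>) * multi_pow r \<nu>} \<subseteq> {\<nu>. f \<nu> \<noteq> 0}"
    using v by auto
  then show "finite {\<nu>. e \<le> v (f \<nu>) * multi_pow r \<nu>}"
    using assms by (rule finite_subset)
qed

lemma tate_ring_add_closed:
  assumes "f \<in> carrier (tate_ring v r)" "g \<in> carrier (tate_ring v r)"
  shows "(\<lambda>\<nu>. f \<nu> + g \<nu>) \<in> carrier (tate_ring v r)"
  unfolding tate_ring_carrier_iff
proof (intro allI impI)
  fix e :: real assume "e > 0"
  have "{\<nu>. e \<le> v (f \<nu> + g \<nu>) * multi_pow r \<nu>}
      \<subseteq> {\<nu>. e \<le> v (f \<nu>) * multi_pow r \<nu>} \<union> {\<nu>. e \<le> v (g \<nu>) * multi_pow r \<nu>}"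
  proof
    fix \<nu> assume "\<nu> \<in> {\<nu>. e \<le> v (f \<nu> + g \<nu>) * multi_pow r \<nu>}"
    moreover have "v (f \<nu> + g \<nu>) * multi_pow r \<nu> \<le> max (v (f \<nu>)) (v (g \<nu>)) * multi_pow r \<nu>"
      using nonarch_abs_add_le_max[OF v] multi_pow_pos[OF r] by (simp add: mult_right_mono)
    ultimately show "\<nu> \<in> {\<nu>. e \<le> v (f \<nu>) * multi_pow r \<nu>} \<union> {\<nu>. e \<le> v (g \<nu>) * multi_pow r \<nu>}"
      by (auto simp: max_def split: if_splits)
  qed
  then show "finite {\<nu>. e \<le> v (f \<nu> + g \<nu>) * multi_pow r \<nu>}"
    using assms \<open>e > 0\<close> unfolding tate_ring_carrier_iff by (auto intro: finite_subset)
qed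

lemma tate_ring_uminus_closed:
  "f \<in> carrier (tate_ring v r) \<Longrightarrow> (\<lambda>\<nu>. - f \<nu>) \<in> carrier (tate_ring v r)"
  by (simp add: tate_ring_carrier_iff nonarch_abs_minus[OF v])

lemma tate_ring_bounded:
  assumes "f \<in> carrier (tate_ring v r)"
  obtains M where "M > 0" "\<And>\<nu>. v (f \<nu>) * multi_pow r \<nu> \<le> M"
proof
  define S where "S = {\<nu>. 1 \<le> v (f \<nu>) * multi_pow r \<nu>}"
  have "finite S" using assms unfolding S_def tate_ring_carrier_iff by simp
  have nonneg: "v (f \<nu>) * multi_pow r \<nu> \<ge> 0" for \<nu>
    using nonarch_abs_nonneg[OF v] multi_pow_pos[OF r] by (simp add: less_imp_le)
  show "1 + (\<Sum>\<nu>\<in>S. v (f \<nu>) * multi_pow r \<nu>) > 0"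
    using nonneg by (simp add: add_pos_nonneg sum_nonneg)
  fix \<nu>
  show "v (f \<nu>) * multi_pow r \<nu> \<le> 1 + (\<Sum>\<nu>\<in>S. v (f \<nu>) * multi_pow r \<nu>)"
  proof (cases "\<nu> \<in> S")
    case True
    then show ?thesis
      using member_le_sum[OF True _ \<open>finite S\<close>, of "\<lambda>\<nu>. v (f \<nu>) * multi_pow r \<nu>"] nonneg
      by simp
  next
    case False
    then show ?thesis using nonneg by (simp add: S_def sum_nonneg add_increasing2)
  qed
qed

lemma pser_mult_large_coeff:
  assumes "e > 0" "e \<le> v (pser_mult f g \<nu>) * multi_pow r \<nu>"
  obtains \<mu> \<beta> where "\<nu> = \<mu> + \<beta>"
    and "e \<le> (v (f \<mu>) * multi_pow r \<mu>) * (v (g \<beta>) * multi_pow r \<beta>)"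
proof -
  have "\<not> v (pser_mult f g \<nu>) < e / multi_pow r \<nu>"
    using assms(2) unfolding pos_less_divide_eq[OF multi_pow_pos[OF r]] by simp
  then have "\<not> v (\<Sum>\<mu>\<in>{..\<nu>}. f \<mu> * g (\<nu> - \<mu>)) < e / multi_pow r \<nu>"
    by (simp only: pser_mult_atMost simp_thms)
  moreover have "e / multi_pow r \<nu> > 0" using assms(1) multi_pow_pos[OF r] by simp
  ultimately obtain \<mu> where "\<mu> \<in> {..\<nu>}" and "\<not> v (f \<mu> * g (\<nu> - \<mu>)) < e / multi_pow r \<nu>"
    using nonarch_abs_sum_less[OF v, of "{..\<nu>}" "\<lambda>\<mu>. f \<mu> * g (\<nu> - \<mu>)" "e / multi_pow r \<nu>"]
    by blast
  moreover define \<beta> where "\<beta> = \<nu> - \<mu>"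
  ultimately have \<nu>: "\<nu> = \<mu> + \<beta>" and "e \<le> v (f \<mu> * g \<beta>) * multi_pow r \<nu>"
    unfolding pos_less_divide_eq[OF multi_pow_pos[OF r]] by (simp_all add: multi_index_add_diff)
  then have "e \<le> (v (f \<mu>) * multi_pow r \<mu>) * (v (g \<beta>) * multi_pow r \<beta>)"
    unfolding \<nu> multi_pow_add nonarch_abs_mult[OF v] by (simp add: ac_simps)
  with \<nu> that show thesis by blast
qed

lemma tate_ring_mult_closed:
  assumes "f \<in> carrier (tate_ring v r)" "g \<in> carrier (tate_ring v r)"
  shows "pser_mult f g \<in> carrier (tate_ring v r)"
  unfolding tate_ring_carrier_iff
proof (intro allI impI)
  fix e :: real assume "e > 0"
  obtain Mf where Mf: "Mf > 0" "\<And>\<nu>. v (f \<nu>) * multi_pow r \<nu> \<le> Mf"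
    using tate_ring_bounded[OF assms(1)] by blast
  obtain Mg where Mg: "Mg > 0" "\<And>\<nu>. v (g \<nu>) * multi_pow r \<nu> \<le> Mg"
    using tate_ring_bounded[OF assms(2)] by blast
  define F where "F = {\<mu>. e / Mg \<le> v (f \<mu>) * multi_pow r \<mu>}"
  define G where "G = {\<beta>. e / Mf \<le> v (g \<beta>) * multi_pow r \<beta>}"
  have "finite (F \<times> G)"
    using assms \<open>e > 0\<close> Mf(1) Mg(1) unfolding F_def G_def tate_ring_carrier_iff by simp
  have "{\<nu>. e \<le> v (pser_mult f g \<nu>) * multi_pow r \<nu>} \<subseteq> (\<lambda>(\<mu>, \<beta>). \<mu> + \<beta>) ` (F \<times> G)"
  proof
    fix \<nu> assume "\<nu> \<in> {\<nu>. e \<le> v (pser_mult f g \<nu>) * multi_pow r \<nu>}"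
    then obtain \<mu> \<beta> where \<nu>: "\<nu> = \<mu> + \<beta>"
      and e: "e \<le> (v (f \<mu>) * multi_pow r \<mu>) * (v (g \<beta>) * multi_pow r \<beta>)"
      using pser_mult_large_coeff[OF \<open>e > 0\<close>] by blast
    have nonneg: "v (f \<mu>) * multi_pow r \<mu> \<ge> 0" "v (g \<beta>) * multi_pow r \<beta> \<ge> 0"
      using nonarch_abs_nonneg[OF v] multi_pow_pos[OF r] by (simp_all add: less_imp_le)
    have "e \<le> (v (f \<mu>) * multi_pow r \<mu>) * Mg"
      using e mult_left_mono[OF Mg(2)[of \<beta>] nonneg(1)] by linarith
    moreover have "e \<le> Mf * (v (g \<beta>) * multi_pow r \<beta>)"
      using e mult_right_mono[OF Mf(2)[of \<mu>] nonneg(2)] by linarith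
    ultimately have "(\<mu>, \<beta>) \<in> F \<times> G"
      using Mf(1) Mg(1) by (simp add: F_def G_def pos_divide_le_eq mult.commute)
    with \<nu> show "\<nu> \<in> (\<lambda>(\<mu>, \<beta>). \<mu> + \<beta>) ` (F \<times> G)" by (auto intro: image_eqI)
  qed
  then show "finite {\<nu>. e \<le> v (pser_mult f g \<nu>) * multi_pow r \<nu>}"
    using \<open>finite (F \<times> G)\<close> by (rule finite_subset[OF _ finite_imageI])
qed

lemma cring_tate_ring: "cring (tate_ring v r)"
proof (rule cringI)
  show "abelian_group (tate_ring v r)"
  proof (rule abelian_groupI)
    fix x assume "x \<in> carrier (tate_ring v r)"
    then show "\<exists>y\<in>carrier (tate_ring v r). y \<oplus>\<^bsub>tate_ring v r\<^esub> x = \<zero>\<^bsub>tate_ring v r\<^esub>"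
      by (intro bexI[of _ "\<lambda>\<nu>. - x \<nu>"]) (simp_all add: tate_ring_simps tate_ring_uminus_closed)
  qed (simp_all add: tate_ring_simps tate_ring_add_closed tate_ring_carrier_finite_support add_ac)
  show "comm_monoid (tate_ring v r)"
  proof (rule comm_monoidI)
    have "finite {\<nu>. (if \<nu> = 0 then 1 else 0) \<noteq> (0::'a)}"
      by (rule finite_subset[of _ "{0}"]) auto
    then show "\<one>\<^bsub>tate_ring v r\<^esub> \<in> carrier (tate_ring v r)"
      by (simp add: tate_ring_simps tate_ring_carrier_finite_support)
  qed (simp_all add: tate_ring_simps tate_ring_mult_closed pser_mult_assoc pser_mult_one_left,
       rule pser_mult_commute)
qed (simp add: tate_ring_simps pser_mult_add_left)

lemma tate_ring_finsum:
  assumes "finite I" "f \<in> I \<rightarrow> carrier (tate_ring v r)"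
  shows "finsum (tate_ring v r) f I = mfps_nth (\<Sum>i\<in>I. Abs_mfps (f i))"
  using assms
proof (induction I rule: finite_induct)
  case empty
  interpret cring "tate_ring v r" by (rule cring_tate_ring)
  show ?case by (simp add: tate_ring_simps)
next
  case (insert i I)
  interpret cring "tate_ring v r" by (rule cring_tate_ring)
  from insert show ?case by (simp add: finsum_insert tate_ring_simps)
qed

text \<open>\<open>|c_\<mu>|^p r^(p \<mu>)\<close> is bounded by a multiple of \<open>|f_(p \<mu> + j)| r^(p \<mu> + j)\<close>, and
  \<open>\<mu> \<mapsto> p \<mu> + j\<close> is injective.\<close>
lemma tate_ring_carrier_of_coeff_bound:
  assumes f: "f \<in> carrier (tate_ring v r)" and "p > 0" "C > 0"
    and bound: "\<And>\<mu>. v (c \<mu>) ^ p \<le> C * v (f (\<lambda>i. p * \<mu> i + j i))"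
  shows "c \<in> carrier (tate_ring v r)"
  unfolding tate_ring_carrier_iff
proof (intro allI impI)
  fix e :: real assume "e > 0"
  define N :: "('n \<Rightarrow> nat) \<Rightarrow> ('n \<Rightarrow> nat)" where "N \<mu> = (\<lambda>i. p * \<mu> i + j i)" for \<mu>
  define e' where "e' = e ^ p * multi_pow r j / C"
  have "inj N" using \<open>p > 0\<close> by (auto simp: N_def inj_def fun_eq_iff)
  have "e' > 0" using \<open>e > 0\<close> \<open>C > 0\<close> multi_pow_pos[OF r] by (simp add: e'_def)
  have "{\<mu>. e \<le> v (c \<mu>) * multi_pow r \<mu>} \<subseteq> N -` {\<nu>. e' \<le> v (f \<nu>) * multi_pow r \<nu>}"
  proof
    fix \<mu> assume "\<mu> \<in> {\<mu>. e \<le> v (c \<mu>) * multi_pow r \<mu>}"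
    then have "e ^ p \<le> (v (c \<mu>) * multi_pow r \<mu>) ^ p"
      using \<open>e > 0\<close> by (simp add: power_mono)
    also have "\<dots> \<le> C * v (f (N \<mu>)) * multi_pow r \<mu> ^ p"
      using bound[of \<mu>] multi_pow_pos[OF r, of \<mu>]
      by (simp add: N_def power_mult_distrib mult_right_mono)
    finally have "e ^ p * multi_pow r j \<le> C * v (f (N \<mu>)) * multi_pow r \<mu> ^ p * multi_pow r j"
      using multi_pow_pos[OF r, of j] by (simp add: mult_right_mono)
    also have "\<dots> = C * (v (f (N \<mu>)) * multi_pow r (N \<mu>))"
      using multi_pow_add[of r "\<lambda>i. p * \<mu> i" j] multi_pow_scale[of r p \<mu>]
      by (simp add: N_def plus_fun_def)
    finally have "e ^ p * multi_pow r j \<le> C * (v (f (N \<mu>)) * multi_pow r (N \<mu>))" .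
    then show "\<mu> \<in> N -` {\<nu>. e' \<le> v (f \<nu>) * multi_pow r \<nu>}"
      using \<open>C > 0\<close> by (simp add: e'_def pos_divide_le_eq mult.commute)
  qed
  moreover have "finite {\<nu>. e' \<le> v (f \<nu>) * multi_pow r \<nu>}"
    using f \<open>e' > 0\<close> unfolding tate_ring_carrier_iff by simp
  then have "finite (N -` {\<nu>. e' \<le> v (f \<nu>) * multi_pow r \<nu>})"
    using \<open>inj N\<close> by (rule finite_vimageI)
  ultimately show "finite {\<mu>. e \<le> v (c \<mu>) * multi_pow r \<mu>}"
    by (rule finite_subset)
qed

end

section \<open>Kaehler differentials\<close>

context cring
begin

lemma fdelta_closed [simp]: "fdelta R x y \<in> carrier R"
  by (simp add: fdelta_def)

lemma kahler_rel_closed: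
  assumes "u \<in> kahler_rel R S"
  shows "u y \<in> carrier R"
  using assms
  by induction (simp_all add: fsub_def fadd_def fsmult_def)

lemma kahler_rel_of_diff:
  assumes "fsub R u w \<in> kahler_rel R S" and "w \<in> kahler_rel R S"
    and "\<And>y. u y \<in> carrier R"
  shows "u \<in> kahler_rel R S"
proof -
  have "fadd R (fsub R u w) w = u"
    using assms(3) kahler_rel_closed[OF assms(2)]
    by (simp add: fadd_def fsub_def fun_eq_iff minus_eq a_assoc l_neg)
  with kahler_rel.sum[OF assms(1,2)] show ?thesis by simp
qed

lemma fdelta_zero_in_kahler_rel: "fdelta R \<zero> \<in> kahler_rel R S"
proof -
  have "fsub R (fdelta R (\<zero> \<otimes> \<zero>)) (fadd R (fsmult R \<zero> (fdelta R \<zero>)) (fsmult R \<zero> (fdelta R \<zero>)))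
        \<in> kahler_rel R S"
    by (intro kahler_rel.mult_rel) simp_all
  then show ?thesis
    by (simp add: fsub_def fadd_def fsmult_def minus_eq)
qed

lemma fdelta_add_in_kahler_rel:
  assumes "x \<in> carrier R" "y \<in> carrier R"
    and "fdelta R x \<in> kahler_rel R S" "fdelta R y \<in> kahler_rel R S"
  shows "fdelta R (x \<oplus> y) \<in> kahler_rel R S"
  using kahler_rel.add_rel[OF assms(1,2)] kahler_rel.sum[OF assms(3,4)]
  by (rule kahler_rel_of_diff) simp

lemma fdelta_mult_in_kahler_rel:
  assumes "x \<in> carrier R" "y \<in> carrier R"
    and "fdelta R x \<in> kahler_rel R S" "fdelta R y \<in> kahler_rel R S"
  shows "fdelta R (x \<otimes> y) \<in> kahler_rel R S"
  using kahler_rel.mult_rel[OF assms(1,2)]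
    kahler_rel.sum[OF kahler_rel.smult[OF assms(1,4)] kahler_rel.smult[OF assms(2,3)]]
  by (rule kahler_rel_of_diff) simp

lemma fdelta_finsum_in_kahler_rel:
  assumes "finite I" "f \<in> I \<rightarrow> carrier R" "\<And>i. i \<in> I \<Longrightarrow> fdelta R (f i) \<in> kahler_rel R S"
  shows "fdelta R (\<Oplus>i\<in>I. f i) \<in> kahler_rel R S"
  using assms
proof (induction I rule: finite_induct)
  case empty
  then show ?case by (simp add: fdelta_zero_in_kahler_rel)
next
  case (insert i I)
  then show ?case
    by (simp add: finsum_insert fdelta_add_in_kahler_rel)
qed

lemma leibniz_identity:
  assumes "a \<in> carrier R" "b \<in> carrier R" "c \<in> carrier R" "h \<in> carrier R" "x \<in> carrier R"
    "m \<in> carrier R"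
  shows "(c \<ominus> (h \<otimes> a \<oplus> x \<otimes> b)) \<oplus> x \<otimes> (b \<ominus> m \<otimes> a) = c \<ominus> (h \<oplus> x \<otimes> m) \<otimes> a"
  using assms by algebra

lemma fdelta_pow_leibniz:
  assumes x: "x \<in> carrier R"
  shows "fsub R (fdelta R (x [^] Suc k)) (fsmult R ([Suc k] \<cdot> (x [^] k)) (fdelta R x))
    \<in> kahler_rel R S"
proof (induction k)
  case 0
  have "fsub R (fdelta R (x [^] Suc 0)) (fsmult R ([Suc 0] \<cdot> (x [^] (0::nat))) (fdelta R x)) = (\<lambda>_. \<zero>)"
    using x by (simp add: fsub_def fsmult_def fun_eq_iff add_pow_def minus_eq r_neg)
  then show ?case by (simp add: kahler_rel.zero)
next
  case (Suc k)
  define h where "h = x [^] Suc k"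
  define m where "m = [Suc k] \<cdot> (x [^] k)"
  have hm: "h \<in> carrier R" "m \<in> carrier R" using x by (simp_all add: h_def m_def)
  have "x \<otimes> m = [Suc k] \<cdot> h"
    using x add_pow_rdistr[of x "x [^] k" "Suc k"] by (simp add: m_def h_def m_comm del: add.nat_pow_Suc)
  moreover have "[Suc (Suc k)] \<cdot> h = [Suc k] \<cdot> h \<oplus> h"
    by (simp add: add_pow_def)
  ultimately have coeff: "h \<oplus> x \<otimes> m = [Suc (Suc k)] \<cdot> h"
    using hm a_comm add.nat_pow_closed by presburger
  have "fadd R
      (fsub R (fdelta R (h \<otimes> x)) (fadd R (fsmult R h (fdelta R x)) (fsmult R x (fdelta R h))))
      (fsmult R x (fsub R (fdelta R h) (fsmult R m (fdelta R x)))) \<in> kahler_rel R S"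
    using Suc.IH hm x unfolding h_def m_def
    by (intro kahler_rel.sum kahler_rel.mult_rel kahler_rel.smult) simp_all
  moreover have "fadd R
      (fsub R (fdelta R (h \<otimes> x)) (fadd R (fsmult R h (fdelta R x)) (fsmult R x (fdelta R h))))
      (fsmult R x (fsub R (fdelta R h) (fsmult R m (fdelta R x))))
    = fsub R (fdelta R (h \<otimes> x)) (fsmult R (h \<oplus> x \<otimes> m) (fdelta R x))"
    using hm x by (simp add: fadd_def fsub_def fsmult_def fun_eq_iff leibniz_identity)
  ultimately have "fsub R (fdelta R (h \<otimes> x)) (fsmult R ([Suc (Suc k)] \<cdot> h) (fdelta R x))
      \<in> kahler_rel R S"
    by (simp only: coeff)
  then show ?case
    by (simp add: h_def)
qed

lemma fdelta_char_pow_in_kahler_rel: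
  fixes p :: nat
  assumes x: "x \<in> carrier R" and "p > 0" and char: "[p] \<cdot> \<one> = \<zero>"
  shows "fdelta R (x [^] p) \<in> kahler_rel R S"
proof -
  obtain k where p: "p = Suc k" using \<open>p > 0\<close> by (cases p) auto
  have "[p] \<cdot> (x [^] k) = \<zero>"
    using add_pow_ldistr[of \<one> "x [^] k" p] x char by simp
  with fdelta_pow_leibniz[OF x, of k] show ?thesis
    by (simp add: p fsub_def fsmult_def minus_eq)
qed

lemma fdelta_finsum_pth_powers_in_kahler_rel:
  fixes p :: nat
  assumes "p > 0" "[p] \<cdot> \<one> = \<zero>" "finite I"
    and "s \<in> I \<rightarrow> S \<inter> carrier R" "y \<in> I \<rightarrow> carrier R"
  shows "fdelta R (\<Oplus>i\<in>I. s i \<otimes> y i [^] p) \<in> kahler_rel R S"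
proof (rule fdelta_finsum_in_kahler_rel[OF assms(3)])
  fix i assume "i \<in> I"
  with assms(4,5) have "s i \<in> S" "s i \<in> carrier R" "y i \<in> carrier R" by auto
  then show "fdelta R (s i \<otimes> y i [^] p) \<in> kahler_rel R S"
    using fdelta_char_pow_in_kahler_rel[OF \<open>y i \<in> carrier R\<close> assms(1,2)]
      kahler_rel.base_rel[OF \<open>s i \<in> S\<close>]
    by (intro fdelta_mult_in_kahler_rel) simp_all
qed (use assms(4,5) in auto)

end

section \<open>Frobenius decomposition of the Tate algebra\<close>

lemma finite_multi_index_less: "finite {j :: 'n::finite \<Rightarrow> nat. \<forall>i. j i < p}"
  by (rule finite_subset[OF _ finite_atMost_multi_index[of "\<lambda>_. p"]])
     (auto simp: le_fun_def less_imp_le)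

lemma multi_index_mod_unique:
  fixes \<nu> j :: "'n \<Rightarrow> nat"
  assumes "\<forall>i. j i < p"
  shows "(j \<le> \<nu> \<and> (\<forall>i. p dvd (\<nu> - j) i)) \<longleftrightarrow> j = (\<lambda>i. \<nu> i mod p)"
proof
  assume "j \<le> \<nu> \<and> (\<forall>i. p dvd (\<nu> - j) i)"
  then have "\<nu> i mod p = j i mod p" for i
    by (metis le_fun_def le_add_diff_inverse2 minus_apply mod_mult_self4 dvdE)
  with assms show "j = (\<lambda>i. \<nu> i mod p)" by (simp add: fun_eq_iff)
next
  assume "j = (\<lambda>i. \<nu> i mod p)"
  then show "j \<le> \<nu> \<and> (\<forall>i. p dvd (\<nu> - j) i)"
    by (simp add: le_fun_def minus_mod_eq_mult_div)
qed

lemma mfps_frobenius_decomposition: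
  fixes f :: "('n::finite, 'a::field) mfps" and g :: "('n \<Rightarrow> nat) \<Rightarrow> 'a \<Rightarrow> ('n, 'a) mfps"
  assumes char: "CHAR('a) > 0"
    and coords: "\<And>j \<mu>. mfps_nth f (\<lambda>i. CHAR('a) * \<mu> i + j i) = (\<Sum>b\<in>B. mfps_nth (g j b) \<mu> ^ CHAR('a) * b)"
  shows "f = (\<Sum>(j, b)\<in>{j. \<forall>i. j i < CHAR('a)} \<times> B. mfps_monom j b * g j b ^ CHAR('a))"
proof (rule mfps_eqI)
  fix \<nu> :: "'n \<Rightarrow> nat"
  define p where "p = CHAR('a)"
  define J where "J = {j :: 'n \<Rightarrow> nat. \<forall>i. j i < p}"
  define j\<^sub>0 where "j\<^sub>0 = (\<lambda>i. \<nu> i mod p)"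
  have "p > 0" using char by (simp add: p_def)
  have "finite J"
    by (simp add: J_def finite_multi_index_less)
  have "j\<^sub>0 \<in> J" using \<open>p > 0\<close> by (simp add: J_def j\<^sub>0_def)
  have summand: "mfps_nth (mfps_monom j b * g j b ^ p) \<nu> =
      (if j = j\<^sub>0 then mfps_nth (g j\<^sub>0 b) (\<lambda>i. \<nu> i div p) ^ p * b else 0)" if "j \<in> J" for j b
  proof -
    have "mfps_nth (mfps_monom j b * g j b ^ p) \<nu> =
        (if j \<le> \<nu> \<and> (\<forall>i. p dvd (\<nu> - j) i)
         then b * mfps_nth (g j b) (\<lambda>i. (\<nu> - j) i div p) ^ p else 0)"
      using mfps_nth_power_CHAR[OF char, of "g j b"]
      by (simp add: mfps_monom_def mfps_nth_mult pser_mult_monom_left p_def)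
    also have "\<dots> = (if j = j\<^sub>0 then b * mfps_nth (g j b) (\<lambda>i. (\<nu> - j) i div p) ^ p else 0)"
      using multi_index_mod_unique[of j p \<nu>] that by (simp add: J_def j\<^sub>0_def)
    also have "\<dots> = (if j = j\<^sub>0 then mfps_nth (g j\<^sub>0 b) (\<lambda>i. \<nu> i div p) ^ p * b else 0)"
      using \<open>p > 0\<close> by (simp add: j\<^sub>0_def minus_mod_eq_mult_div mult.commute)
    finally show ?thesis .
  qed
  have "mfps_nth (\<Sum>(j, b)\<in>J \<times> B. mfps_monom j b * g j b ^ p) \<nu> =
      (\<Sum>j\<in>J. \<Sum>b\<in>B. mfps_nth (mfps_monom j b * g j b ^ p) \<nu>)"
    by (simp add: mfps_nth_sum sum.cartesian_product case_prod_beta)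
  also have "\<dots> = (\<Sum>j\<in>J. if j = j\<^sub>0 then (\<Sum>b\<in>B. mfps_nth (g j\<^sub>0 b) (\<lambda>i. \<nu> i div p) ^ p * b) else 0)"
    by (rule sum.cong[OF refl]) (simp add: summand)
  also have "\<dots> = (\<Sum>b\<in>B. mfps_nth (g j\<^sub>0 b) (\<lambda>i. \<nu> i div p) ^ p * b)"
    using \<open>finite J\<close> \<open>j\<^sub>0 \<in> J\<close> by (simp add: sum.delta)
  also have "\<dots> = mfps_nth f \<nu>"
    using coords[of "\<lambda>i. \<nu> i div p" j\<^sub>0] by (simp add: p_def j\<^sub>0_def)
  finally show "mfps_nth f \<nu> = mfps_nth (\<Sum>(j, b)\<in>{j. \<forall>i. j i < CHAR('a)} \<times> B. mfps_monom j b * g j b ^ CHAR('a)) \<nu>"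
    by (simp add: J_def p_def)
qed

lemma tate_ring_add_pow_CHAR:
  fixes v :: "'a::field \<Rightarrow> real" and r :: "'n::finite \<Rightarrow> real"
  shows "[CHAR('a)] \<cdot>\<^bsub>tate_ring v r\<^esub> \<one>\<^bsub>tate_ring v r\<^esub> = \<zero>\<^bsub>tate_ring v r\<^esub>"
proof -
  have "(of_nat CHAR('a) :: ('n, 'a) mfps) = 0"
    using of_nat_CHAR[where 'a = "('n, 'a) mfps"] by (simp only: CHAR_mfps)
  then show ?thesis by (simp only: tate_ring_add_pow_one) (simp add: tate_ring_simps)
qed

lemma tate_ring_monom_in_carrier:
  assumes "nonarch_abs v" "\<forall>i. r i > 0"
  shows "pser_monom j b \<in> poly_set \<inter> carrier (tate_ring v r)"
proof -
  have "finite {\<nu>. pser_monom j b \<nu> \<noteq> 0}"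
    by (rule finite_subset[of _ "{j}"]) (auto simp: pser_monom_def)
  then show ?thesis
    using tate_ring_carrier_finite_support[OF assms] by (simp add: poly_set_def)
qed

lemma tate_ring_frobenius_decomposition:
  fixes f :: "('n::finite, 'a::field) pser" and g :: "('n \<Rightarrow> nat) \<Rightarrow> 'a \<Rightarrow> ('n, 'a) pser"
  assumes v: "nonarch_abs v" and r: "\<forall>i. r i > 0" and char: "CHAR('a) > 0" and "finite B"
    and g: "\<And>j b. b \<in> B \<Longrightarrow> g j b \<in> carrier (tate_ring v r)"
    and coords: "\<And>j \<mu>. f (\<lambda>i. CHAR('a) * \<mu> i + j i) = (\<Sum>b\<in>B. g j b \<mu> ^ CHAR('a) * b)"
  shows "f = (\<Oplus>\<^bsub>tate_ring v r\<^esub>x\<in>{j. \<forall>i. j i < CHAR('a)} \<times> B.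
    case_prod pser_monom x \<otimes>\<^bsub>tate_ring v r\<^esub> case_prod g x [^]\<^bsub>tate_ring v r\<^esub> CHAR('a))"
proof -
  interpret cring "tate_ring v r" by (rule cring_tate_ring[OF v r])
  define J where "J = {j :: 'n \<Rightarrow> nat. \<forall>i. j i < CHAR('a)}"
  have "case_prod pser_monom x \<otimes>\<^bsub>tate_ring v r\<^esub> case_prod g x [^]\<^bsub>tate_ring v r\<^esub> CHAR('a) =
      mfps_nth (case_prod mfps_monom x * Abs_mfps (case_prod g x) ^ CHAR('a))" for x
    by (simp add: tate_ring_simps tate_ring_nat_pow mfps_nth_mult mfps_monom_def split: prod.split)
  moreover have "(\<lambda>x. case_prod pser_monom x \<otimes>\<^bsub>tate_ring v r\<^esub> case_prod g x [^]\<^bsub>tate_ring v r\<^esub> CHAR('a))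
      \<in> J \<times> B \<rightarrow> carrier (tate_ring v r)"
    using tate_ring_monom_in_carrier[OF v r] g by auto
  ultimately have "(\<Oplus>\<^bsub>tate_ring v r\<^esub>x\<in>J \<times> B.
      case_prod pser_monom x \<otimes>\<^bsub>tate_ring v r\<^esub> case_prod g x [^]\<^bsub>tate_ring v r\<^esub> CHAR('a)) =
      mfps_nth (\<Sum>(j, b)\<in>J \<times> B. mfps_monom j b * Abs_mfps (g j b) ^ CHAR('a))"
    using \<open>finite B\<close> by (simp add: J_def finite_multi_index_less tate_ring_finsum[OF v r]
        mfps_nth_inverse case_prod_unfold)
  also have "(\<Sum>(j, b)\<in>J \<times> B. mfps_monom j b * Abs_mfps (g j b) ^ CHAR('a)) = Abs_mfps f"
    unfolding J_def using coords
    by (intro mfps_frobenius_decomposition[OF char, symmetric]) simp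
  finally show ?thesis by (simp add: J_def)
qed

lemma tate_ring_frobenius_span:
  fixes v :: "'a::field \<Rightarrow> real" and r :: "'n::finite \<Rightarrow> real"
  assumes v: "nonarch_abs v" and "abs_complete v" and char: "CHAR('a) > 0" and r: "\<forall>i. r i > 0"
    and "finite_p_degree TYPE('a) CHAR('a)" and f: "f \<in> carrier (tate_ring v r)"
  obtains I :: "(('n \<Rightarrow> nat) \<times> 'a) set" and s y
  where "finite I" "s \<in> I \<rightarrow> poly_set \<inter> carrier (tate_ring v r)" "y \<in> I \<rightarrow> carrier (tate_ring v r)"
    and "f = (\<Oplus>\<^bsub>tate_ring v r\<^esub>i\<in>I. s i \<otimes>\<^bsub>tate_ring v r\<^esub> y i [^]\<^bsub>tate_ring v r\<^esub> CHAR('a))"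
proof -
  obtain B :: "'a set" where B: "finite B" "\<And>a. a \<in> pth_power_span B"
    using assms(5) unfolding finite_p_degree_def pth_power_span_def by blast
  obtain C where "C > 0" "bounded_pth_power_coords v B C"
    using bounded_pth_power_coords_exists[OF v assms(2) char B(1)] by blast
  then obtain rep where rep: "\<And>a. a = (\<Sum>b\<in>B. rep a b ^ CHAR('a) * b)"
    "\<And>a b. b \<in> B \<Longrightarrow> v (rep a b) ^ CHAR('a) \<le> C * v a"
    using B(2) unfolding bounded_pth_power_coords_def by metis
  define g where "g j b \<mu> = rep (f (\<lambda>i. CHAR('a) * \<mu> i + j i)) b" for j b \<mu>
  have g: "g j b \<in> carrier (tate_ring v r)" if "b \<in> B" for j b
    using rep(2)[OF that] char \<open>C > 0\<close> unfolding g_def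
    by (intro tate_ring_carrier_of_coeff_bound[OF v r f]) auto
  then have "f = (\<Oplus>\<^bsub>tate_ring v r\<^esub>x\<in>{j. \<forall>i. j i < CHAR('a)} \<times> B.
      case_prod pser_monom x \<otimes>\<^bsub>tate_ring v r\<^esub> case_prod g x [^]\<^bsub>tate_ring v r\<^esub> CHAR('a))"
    using rep(1) by (intro tate_ring_frobenius_decomposition[OF v r char B(1)]) (simp_all add: g_def)
  moreover have "finite ({j :: 'n \<Rightarrow> nat. \<forall>i. j i < CHAR('a)} \<times> B)"
    using B(1) by (simp add: finite_multi_index_less)
  moreover have "case_prod pser_monom \<in> {j. \<forall>i. j i < CHAR('a)} \<times> B \<rightarrow> poly_set \<inter> carrier (tate_ring v r)"
    using tate_ring_monom_in_carrier[OF v r] by auto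
  moreover have "case_prod g \<in> {j. \<forall>i. j i < CHAR('a)} \<times> B \<rightarrow> carrier (tate_ring v r)"
    using g by auto
  ultimately show thesis by (intro that)
qed

theorem lemma2p15:
  fixes v :: "'a::field \<Rightarrow> real" and r :: "'n::finite \<Rightarrow> real"
  assumes "nonarch_abs v"
    and "abs_complete v"
    and "CHAR('a) > 0"
    and "\<forall>i. r i > 0"
    and "finite_p_degree TYPE('a) CHAR('a)"
  shows "kahler_zero (tate_ring v r) (poly_set :: ('n, 'a) pser set)"
  unfolding kahler_zero_def
proof
  fix f assume "f \<in> carrier (tate_ring v r)"
  with assms obtain I :: "(('n \<Rightarrow> nat) \<times> 'a) set" and s y
    where I: "finite I" "s \<in> I \<rightarrow> poly_set \<inter> carrier (tate_ring v r)" "y \<in> I \<rightarrow> carrier (tate_ring v r)"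
      and f: "f = (\<Oplus>\<^bsub>tate_ring v r\<^esub>i\<in>I. s i \<otimes>\<^bsub>tate_ring v r\<^esub> y i [^]\<^bsub>tate_ring v r\<^esub> CHAR('a))"
    by (elim tate_ring_frobenius_span)
  show "fdelta (tate_ring v r) f \<in> kahler_rel (tate_ring v r) poly_set"
    unfolding f
    by (rule cring.fdelta_finsum_pth_powers_in_kahler_rel[OF cring_tate_ring[OF assms(1,4)]
          assms(3) tate_ring_add_pow_CHAR I])
qed

end
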